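(* At any time during the execution of DASH (described in the context) on an initially connected graph, every surviving node $v$ satisfies $\mathrm{rem}(v)\ge 2^{\delta(v)/2}$.
   Context: Model: a network is an undirected graph, initially a connected graph $G_0$ on $n$ nodes. In each round an adversary deletes one surviving node $v$ with its incident edges, and then DASH adds edges. $G$ is the current network; $E'$ is the set of healing edges added so far whose endpoints both survive; $G'=(V(G),E')$. $N(u,G)$, $N(u,G')$ are neighbor sets in $G$, $G'$; $\delta(u)=\deg_G(u)-\deg_{G_0}(u)$ is the degree increase of $u$ relative to its initial degree. DASH: initially every node receives an ID drawn independently and uniformly from $[0,1]$ (its initial ID). When $v$ is deleted (quantities evaluated just before the deletion): partition the nodes of $N(v,G)$ whose current ID differs from that of $v$ into classes of equal current ID; $UN(v,G)$ consists of one node per class, the one with lowest initial ID. Let $S=UN(v,G)\cup N(v,G')$. Order $S$ by increasing $\delta$ and place it in this order into a complete binary tree with $|S|$ positions, filled level by level from the top and left to right; add to the network and to $E'$ the edge between each node of $S$ and the node at its parent position. Then all nodes of the component of $G'$ containing $S$ set their ID to the minimum current ID in $S$. Weights: every node $u$ has weight $w(u)$, initially $1$; when a node $v$ is deleted, $w(v)$ is added to the weight of an arbitrarily chosen node of $N(v,G')$. For a subgraph $H$, $W(H)$ is the sum of the weights of its vertices. For distinct surviving nodes $x,y$, $T(x,y)$ is the connected component of $G'-y$ containing $x$. Define $\mathrm{rem}(v)=\sum_{u\in N(v,G')}W(T(u,v))-\max_{u\in N(v,G')}W(T(u,v))+w(v)$ (the maximum over the empty set being $0$). *)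

theory Defs
  imports Complex_Main
begin

text \<open>Undirected simple graphs are represented by a vertex set and a set of edges,
each edge being a two-element set of vertices.\<close>

record 'a dash_state =
  alive :: "'a set"
  gE    :: "'a set set"
  hE    :: "'a set set"        \<comment> \<open>E': healing edges with both endpoints surviving\<close>
  cid   :: "'a \<Rightarrow> real"
  wt    :: "'a \<Rightarrow> nat"

definition nbrs :: "'a set set \<Rightarrow> 'a \<Rightarrow> 'a set" where
  "nbrs E u = {x. {u, x} \<in> E \<and> x \<noteq> u}"

definition reach :: "'a set set \<Rightarrow> 'a \<Rightarrow> 'a \<Rightarrow> bool" where
  "reach E x y \<longleftrightarrow> (x, y) \<in> {(a, b). {a, b} \<in> E}\<^sup>*"

definition simple_graph :: "'a set \<Rightarrow> 'a set set \<Rightarrow> bool" where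
  "simple_graph V E \<longleftrightarrow> (\<forall>e\<in>E. \<exists>a b. e = {a, b} \<and> a \<noteq> b \<and> a \<in> V \<and> b \<in> V)"

definition connected_graph :: "'a set \<Rightarrow> 'a set set \<Rightarrow> bool" where
  "connected_graph V E \<longleftrightarrow> (\<forall>x\<in>V. \<forall>y\<in>V. reach E x y)"

definition delta :: "'a set set \<Rightarrow> 'a set set \<Rightarrow> 'a \<Rightarrow> int" where
  "delta E0 E u = int (card (nbrs E u)) - int (card (nbrs E0 u))"

definition UNset :: "('a \<Rightarrow> real) \<Rightarrow> ('a \<Rightarrow> real) \<Rightarrow> 'a set set \<Rightarrow> 'a \<Rightarrow> 'a set" where
  "UNset iid idf E v = {x \<in> nbrs E v. idf x \<noteq> idf v \<and>
      (\<forall>y \<in> nbrs E v. idf y = idf x \<longrightarrow> iid x \<le> iid y)}"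

text \<open>Edges of the complete binary tree in which the list xs is placed level by level
 (heap order): position i (0-based, i > 0) has parent position (i - 1) div 2.\<close>
definition tree_edges :: "'a list \<Rightarrow> 'a set set" where
  "tree_edges xs = {{xs ! i, xs ! ((i - 1) div 2)} | i. 0 < i \<and> i < length xs}"

definition Tcomp :: "'a set set \<Rightarrow> 'a \<Rightarrow> 'a \<Rightarrow> 'a set" where
  "Tcomp E' x y = {z. (x, z) \<in> {(a, b). {a, b} \<in> E' \<and> a \<noteq> y \<and> b \<noteq> y}\<^sup>*}"

definition Wt :: "('a \<Rightarrow> nat) \<Rightarrow> 'a set \<Rightarrow> real" where
  "Wt w A = real (\<Sum>u\<in>A. w u)"

definition rem :: "'a dash_state \<Rightarrow> 'a \<Rightarrow> real" where
  "rem s v = (\<Sum>u\<in>nbrs (hE s) v. Wt (wt s) (Tcomp (hE s) u v))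
            - Max (insert 0 ((\<lambda>u. Wt (wt s) (Tcomp (hE s) u v)) ` nbrs (hE s) v))
            + real (wt s v)"

text \<open>Nondeterminism covers the
 adversary's choice of v, the tie-breaking in the ordering of S by delta, and the
 arbitrary choice of the node c receiving the weight of v.\<close>
inductive dash_reachable ::
  "'a set \<Rightarrow> 'a set set \<Rightarrow> ('a \<Rightarrow> real) \<Rightarrow> 'a dash_state \<Rightarrow> bool"
  for V0 E0 iid where
  init: "dash_reachable V0 E0 iid
           \<lparr>alive = V0, gE = E0, hE = {}, cid = iid, wt = (\<lambda>_. 1)\<rparr>"
| step: "\<lbrakk> dash_reachable V0 E0 iid s;
          v \<in> alive s;
          S = UNset iid (cid s) (gE s) v \<union> nbrs (hE s) v;
          set xs = S; distinct xs;
          sorted (map (delta E0 (gE s)) xs);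
          nbrs (hE s) v \<noteq> {} \<longrightarrow> c \<in> nbrs (hE s) v;
          H = tree_edges xs;
          E'new = {e \<in> hE s. v \<notin> e} \<union> H \<rbrakk>
   \<Longrightarrow> dash_reachable V0 E0 iid
        \<lparr>alive = alive s - {v},
         gE = {e \<in> gE s. v \<notin> e} \<union> H,
         hE = E'new,
         cid = (\<lambda>y. if (\<exists>x\<in>S. reach E'new x y) then Min (cid s ` S) else cid s y),
         wt = (if nbrs (hE s) v = {} then wt s else (wt s)(c := wt s c + wt s v))\<rparr>"

end

theory Submission
  imports Defs
begin

text \<open>The healing graph G' is a forest, and two
surviving nodes carry the same ID exactly when they lie in the same component of G'. Moreover
every surviving node x satisfies 2 powr (delta x / 2) \<le> W(C) both for its component C in G' and
for its component C in G' - z, for every G'-neighbour z of x. Applied to v and to its neighbour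
u whose subtree T(u,v) is heaviest, the second inequality bounds rem v, since the component of v
in G' - u consists of v and the subtrees T(u',v) of the other neighbours u'.

When v is deleted, the nodes of S lie in pairwise distinct components of G' - v (the pieces),
and the new binary tree on S joins these pieces into one tree. A node at position i of the tree
loses its edge to v and gains at most three tree edges, so its bound grows only if it gets at
least two tree neighbours, and then it at most doubles. In that case, because S is ordered by
delta, each component that has to be bounded contains the pieces of two nodes of S whose bounds
are at least the old bound of the node, and these disjoint pieces carry twice that bound.\<close>

definition edge_rel :: "'a set set \<Rightarrow> ('a \<times> 'a) set" where
  "edge_rel E = {(a,b). {a,b} \<in> E}"

definition component :: "'a set set \<Rightarrow> 'a \<Rightarrow> 'a set" where
  "component E a = {z. (a,z) \<in> (edge_rel E)\<^sup>*}"

definition del_verts :: "'a set set \<Rightarrow> 'a set \<Rightarrow> 'a set set" where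
  "del_verts E Z = {e\<in>E. e \<inter> Z = {}}"

lemma Tcomp_eq_component: "Tcomp E x y = component (del_verts E {y}) x"
  unfolding Tcomp_def component_def del_verts_def edge_rel_def
  by (rule arg_cong[where f="\<lambda>R. {z. (x,z) \<in> R\<^sup>*}"]) auto

lemma reach_iff_component: "reach E x y \<longleftrightarrow> y \<in> component E x"
  unfolding reach_def component_def edge_rel_def by simp

lemma sym_edge_rel: "sym (edge_rel E)"
  unfolding edge_rel_def sym_def by (simp add: insert_commute)

lemma component_self[simp]: "a \<in> component E a"
  unfolding component_def by simp

lemma component_sym: "b \<in> component E a \<Longrightarrow> a \<in> component E b"
  unfolding component_def using symD[OF sym_rtrancl[OF sym_edge_rel[of E]]] by simp

lemma component_trans: "b \<in> component E a \<Longrightarrow> c \<in> component E b \<Longrightarrow> c \<in> component E a"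
  unfolding component_def by (meson mem_Collect_eq rtrancl_trans)

lemma component_same: "x \<in> component E a \<Longrightarrow> y \<in> component E a \<Longrightarrow> y \<in> component E x"
  using component_sym component_trans by metis

lemma component_subset: "b \<in> component E a \<Longrightarrow> component E b \<subseteq> component E a"
  using component_trans by fast

lemma component_eqI: "b \<in> component E a \<Longrightarrow> component E b = component E a"
  using component_subset component_sym by (metis subset_antisym)

lemma component_edge: "{a,b} \<in> E \<Longrightarrow> b \<in> component E a"
  unfolding component_def edge_rel_def by auto

lemma component_mono: "E \<subseteq> E' \<Longrightarrow> component E a \<subseteq> component E' a"
  unfolding component_def edge_rel_def by (auto elim: rtrancl_mono[THEN subsetD, rotated])

lemma component_closed:
  assumes "a \<in> X" "\<And>p q. {p,q} \<in> E \<Longrightarrow> p \<in> X \<Longrightarrow> q \<in> X"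
  shows "component E a \<subseteq> X"
proof
  fix z assume "z \<in> component E a"
  then have "(a,z) \<in> (edge_rel E)\<^sup>*" unfolding component_def by simp
  then show "z \<in> X"
    by (induction rule: rtrancl_induct) (use assms in \<open>auto simp: edge_rel_def\<close>)
qed

lemma component_no_nbrs: "nbrs E v = {} \<Longrightarrow> component E v = {v}"
proof -
  assume N: "nbrs E v = {}"
  have "component E v \<subseteq> {v}"
    by (rule component_closed) (use N in \<open>auto simp: nbrs_def\<close>)
  then show ?thesis by auto
qed

lemma component_subset_vertices: "component E a \<subseteq> insert a (\<Union>E)"
  by (rule component_closed) auto

lemma finite_component: "finite E \<Longrightarrow> \<forall>e\<in>E. finite e \<Longrightarrow> finite (component E a)"
  by (rule finite_subset[OF component_subset_vertices]) auto

lemma finite_nbrs: "finite E \<Longrightarrow> \<forall>e\<in>E. finite e \<Longrightarrow> finite (nbrs E v)"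
  by (rule finite_subset[of _ "\<Union>E"]) (auto simp: nbrs_def)

lemma nbrs_sym: "y \<in> nbrs E x \<longleftrightarrow> x \<in> nbrs E y"
  unfolding nbrs_def by (auto simp: insert_commute)

lemma del_verts_empty[simp]: "del_verts E {} = E"
  by (auto simp: del_verts_def)

lemma finite_del_verts_component:
  "finite E \<Longrightarrow> \<forall>e\<in>E. finite e \<Longrightarrow> finite (component (del_verts E Z) a)"
  by (rule finite_component) (auto simp: del_verts_def)

lemma component_Un_disjoint:
  assumes "\<And>e. e \<in> F \<Longrightarrow> e \<inter> component E a = {}"
  shows "component (E \<union> F) a = component E a"
proof
  show "component E a \<subseteq> component (E \<union> F) a" by (rule component_mono) auto
  show "component (E \<union> F) a \<subseteq> component E a"
  proof (rule component_closed)
    fix p q assume e: "{p,q} \<in> E \<union> F" and p: "p \<in> component E a"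
    then have "{p,q} \<in> E" using assms by blast
    then show "q \<in> component E a" using p component_edge component_trans by metis
  qed simp
qed

lemma component_del_verts_disjoint:
  assumes "Z \<inter> component E a = {}"
  shows "component (del_verts E Z) a = component E a"
proof
  show "component (del_verts E Z) a \<subseteq> component E a"
    by (rule component_mono) (auto simp: del_verts_def)
  show "component E a \<subseteq> component (del_verts E Z) a"
  proof (rule component_closed)
    fix p q assume e: "{p,q} \<in> E" and p: "p \<in> component (del_verts E Z) a"
    have "p \<in> component E a" using p component_mono[of "del_verts E Z" E] by (auto simp: del_verts_def)
    moreover have "q \<in> component E a" using calculation e component_edge component_trans by metis
    ultimately have "{p,q} \<in> del_verts E Z" using e assms by (auto simp: del_verts_def)
    then show "q \<in> component (del_verts E Z) a" using p component_edge component_trans by metis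
  qed simp
qed

lemma component_del_verts_split:
  assumes "v \<notin> Z"
  shows "component (del_verts E Z) v \<subseteq> insert v (\<Union>u\<in>nbrs E v - Z. component (del_verts E {v}) u)"
proof (rule component_closed)
  fix p q assume e: "{p,q} \<in> del_verts E Z"
    and p: "p \<in> insert v (\<Union>u\<in>nbrs E v - Z. component (del_verts E {v}) u)"
  have eE: "{p,q} \<in> E" and eZ: "{p,q} \<inter> Z = {}" using e by (auto simp: del_verts_def)
  show "q \<in> insert v (\<Union>u\<in>nbrs E v - Z. component (del_verts E {v}) u)"
  proof (cases "q = v \<or> p = v")
    case True
    then have "q = v \<or> q \<in> nbrs E v - Z" using eE eZ by (auto simp: nbrs_def insert_commute)
    then show ?thesis by force
  next
    case False
    then obtain u where u: "u \<in> nbrs E v - Z" "p \<in> component (del_verts E {v}) u" using p by auto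
    have "{p,q} \<in> del_verts E {v}" using eE False by (auto simp: del_verts_def)
    then have "q \<in> component (del_verts E {v}) u" using u(2) component_edge component_trans by metis
    then show ?thesis using u(1) by blast
  qed
qed simp

lemma component_insert_subset:
  "component (insert {p,q} F) a \<subseteq> component F a \<union> component F p \<union> component F q"
proof (rule component_closed)
  fix x y assume e: "{x,y} \<in> insert {p,q} F" and x: "x \<in> component F a \<union> component F p \<union> component F q"
  show "y \<in> component F a \<union> component F p \<union> component F q"
  proof (cases "{x,y} = {p,q}")
    case True then have "y \<in> {p,q}" by blast
    then show ?thesis by auto
  next
    case False then have "{x,y} \<in> F" using e by auto
    then have y: "y \<in> component F x" by (rule component_edge)
    from x show ?thesis
    proof (elim UnE)
      assume "x \<in> component F a" then show ?thesis using y component_trans[of x F a y] by simp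
    next
      assume "x \<in> component F p" then show ?thesis using y component_trans[of x F p y] by simp
    next
      assume "x \<in> component F q" then show ?thesis using y component_trans[of x F q y] by simp
    qed
  qed
qed simp

lemma component_insert_disjoint:
  "p \<notin> component F a \<Longrightarrow> q \<notin> component F a \<Longrightarrow> component (insert {p,q} F) a = component F a"
  using component_Un_disjoint[of "{{p,q}}" F a] by auto

definition forest :: "'a set set \<Rightarrow> bool" where
  "forest E \<longleftrightarrow> (\<forall>a b. {a,b} \<in> E \<longrightarrow> a \<noteq> b \<longrightarrow> b \<notin> component (E - {{a,b}}) a)"

lemma forest_empty: "forest {}"
  unfolding forest_def by simp

lemma forest_mono:
  assumes "forest E" "E' \<subseteq> E"
  shows "forest E'"
  unfolding forest_def
proof (intro allI impI)
  fix a b assume ab: "{a,b} \<in> E'" "a \<noteq> b"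
  have "component (E' - {{a,b}}) a \<subseteq> component (E - {{a,b}}) a"
    using assms(2) by (intro component_mono) auto
  then show "b \<notin> component (E' - {{a, b}}) a" using assms ab unfolding forest_def by blast
qed

lemma forest_nbrs_separated:
  assumes "forest E" "{a,u1} \<in> E" "{a,u2} \<in> E" "u1 \<noteq> u2" "a \<noteq> u1" "a \<noteq> u2"
  shows "u2 \<notin> component (del_verts E {a}) u1"
proof
  assume h: "u2 \<in> component (del_verts E {a}) u1"
  have "{a,u1} \<in> E - {{a,u2}}" using assms(2,4,5) by (auto simp: doubleton_eq_iff)
  then have 1: "u1 \<in> component (E - {{a,u2}}) a" by (rule component_edge)
  have "del_verts E {a} \<subseteq> E - {{a,u2}}" by (auto simp: del_verts_def)
  then have "component (del_verts E {a}) u1 \<subseteq> component (E - {{a,u2}}) u1" by (rule component_mono)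
  then have 2: "u2 \<in> component (E - {{a,u2}}) u1" using h by blast
  have "u2 \<in> component (E - {{a,u2}}) a" using component_trans[OF 1 2] .
  then show False using assms(1,3,6) unfolding forest_def by blast
qed

lemma forest_insert:
  assumes F: "forest E" and pq: "p \<noteq> q" "q \<notin> component E p"
  shows "forest (insert {p,q} E)"
  unfolding forest_def
proof (intro allI impI)
  fix a b assume ab: "{a,b} \<in> insert {p,q} E" "a \<noteq> b"
  show "b \<notin> component (insert {p, q} E - {{a, b}}) a"
  proof (cases "{a,b} = {p,q}")
    case True
    have "component (insert {p, q} E - {{a, b}}) a \<subseteq> component E a"
      using True by (intro component_mono) auto
    moreover have "b \<notin> component E a"
      using True pq component_sym by (metis doubleton_eq_iff)
    ultimately show ?thesis by blast
  next
    case False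
    let ?E' = "E - {{a,b}}"
    have abE: "{a,b} \<in> E" using ab False by auto
    have nb: "b \<notin> component ?E' a" using F abE ab(2) unfolding forest_def by blast
    have sub: "component ?E' x \<subseteq> component E x" for x by (rule component_mono) auto
    have ba: "b \<in> component E a" using abE by (rule component_edge)
    show ?thesis
    proof
      assume "b \<in> component (insert {p, q} E - {{a, b}}) a"
      then have b': "b \<in> component (insert {p,q} ?E') a"
        using False by (metis insert_Diff_if singletonD)
      have a_in: "p \<in> component ?E' a \<or> q \<in> component ?E' a"
        using component_insert_disjoint[of p ?E' a q] b' nb by auto
      have b_in: "b \<in> component ?E' p \<or> b \<in> component ?E' q"
        using component_insert_subset[of p q ?E' a] b' nb by auto
      have "\<not> (p \<in> component ?E' a \<and> b \<in> component ?E' p)" "\<not> (q \<in> component ?E' a \<and> b \<in> component ?E' q)"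
        using nb component_trans by metis+
      then have "p \<in> component ?E' a \<and> b \<in> component ?E' q \<or> q \<in> component ?E' a \<and> b \<in> component ?E' p"
        using a_in b_in by blast
      then have "q \<in> component E p"
      proof (elim disjE conjE)
        assume "p \<in> component ?E' a" "b \<in> component ?E' q"
        then have pa: "p \<in> component E a" and bq: "b \<in> component E q" using sub[of a] sub[of q] by blast+
        show ?thesis using component_trans[OF component_same[OF pa ba] component_sym[OF bq]] .
      next
        assume "q \<in> component ?E' a" "b \<in> component ?E' p"
        then have qa: "q \<in> component E a" and bp: "b \<in> component E p" using sub[of a] sub[of p] by blast+
        show ?thesis using component_trans[OF bp component_sym[OF component_same[OF qa ba]]] .
      qed
      then show False using pq by blast
    qed
  qed
qed

lemma Wt_mono: "finite B \<Longrightarrow> A \<subseteq> B \<Longrightarrow> Wt w A \<le> Wt w B"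
  unfolding Wt_def by (simp add: sum_mono2)

lemma Wt_union: "finite A \<Longrightarrow> finite B \<Longrightarrow> A \<inter> B = {} \<Longrightarrow> Wt w (A \<union> B) = Wt w A + Wt w B"
  unfolding Wt_def by (simp add: sum.union_disjoint)

lemma Wt_le_fun: "(\<And>x. w x \<le> w' x) \<Longrightarrow> Wt w A \<le> Wt w' A"
  unfolding Wt_def by (simp add: sum_mono)

lemma Wt_nonneg: "0 \<le> Wt w A"
  unfolding Wt_def by (simp only: of_nat_0_le_iff)

lemma Wt_transfer:
  assumes "finite T" "finite T'" "T - {v} \<subseteq> T'" "c \<in> T'"
  shows "Wt w T \<le> Wt (w(c := w c + w v)) T'"
proof -
  let ?w' = "w(c := w c + w v)"
  have "sum w T = sum w (T \<inter> {v}) + sum w (T - {v})" using assms(1) by (rule sum.Int_Diff)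
  moreover have "sum w (T \<inter> {v}) \<le> w v" by (cases "v \<in> T") auto
  moreover have "sum w (T - {v}) \<le> sum w T'" using assms(2,3) by (rule sum_mono2) simp
  moreover have "sum ?w' (T' - {c}) = sum w (T' - {c})" by (rule sum.cong) auto
  then have "sum ?w' T' = w v + sum w T'"
    using sum.remove[OF assms(2,4), of ?w'] sum.remove[OF assms(2,4), of w] by simp
  ultimately have "sum w T \<le> sum ?w' T'" by linarith
  then show ?thesis unfolding Wt_def by (simp only: of_nat_le_iff)
qed

lemma sum_UN_le: "finite I \<Longrightarrow> \<forall>i\<in>I. finite (A i) \<Longrightarrow>
   sum (w::'a \<Rightarrow> nat) (\<Union>i\<in>I. A i) \<le> (\<Sum>i\<in>I. sum w (A i))"
proof (induction I rule: finite_induct)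
  case empty then show ?case by simp
next
  case (insert i I)
  have "sum w (\<Union>j\<in>insert i I. A j) = sum w (A i \<union> (\<Union>j\<in>I. A j))" by simp
  also have "\<dots> \<le> sum w (A i) + sum w (\<Union>j\<in>I. A j)"
  proof -
    have f1: "finite (A i)" "finite (\<Union>j\<in>I. A j)" using insert by auto
    show ?thesis using sum.union_inter[OF f1, of w] by linarith
  qed
  also have "\<dots> \<le> sum w (A i) + (\<Sum>j\<in>I. sum w (A j))" using insert by simp
  finally show ?case using insert by simp
qed

lemma Wt_component_del_nbr_le:
  assumes fin: "finite E" "\<forall>e\<in>E. finite e" and u0: "u0 \<in> nbrs E v"
  shows "Wt w (component (del_verts E {u0}) v) \<le> (\<Sum>u\<in>nbrs E v - {u0}. Wt w (Tcomp E u v)) + real (w v)"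
proof -
  let ?X = "\<Union>u\<in>nbrs E v - {u0}. component (del_verts E {v}) u"
  have finN: "finite (nbrs E v - {u0})" using finite_nbrs[OF fin] by simp
  have finC: "finite (component (del_verts E {v}) u)" for u using fin by (rule finite_del_verts_component)
  have finX: "finite ?X" using finN finC by blast
  have "v \<noteq> u0" using u0 by (auto simp: nbrs_def)
  then have "component (del_verts E {u0}) v \<subseteq> insert v ?X"
    using component_del_verts_split[of v "{u0}" E] by simp
  then have "sum w (component (del_verts E {u0}) v) \<le> sum w (insert v ?X)"
    using finX by (intro sum_mono2) auto
  also have "\<dots> \<le> w v + sum w ?X" using finX by (simp add: sum.insert_if)
  also have "sum w ?X \<le> (\<Sum>u\<in>nbrs E v - {u0}. sum w (component (del_verts E {v}) u))"
    using finN finC by (intro sum_UN_le) auto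
  finally show ?thesis unfolding Wt_def Tcomp_eq_component
    by (simp add: of_nat_sum[symmetric] del: of_nat_sum)
qed

lemma rem_ge:
  assumes fin: "finite (hE s)" "\<forall>e\<in>hE s. finite e"
    and K: "L \<le> Wt (wt s) (component (hE s) v)"
    and T: "\<And>z. z \<in> nbrs (hE s) v \<Longrightarrow> L \<le> Wt (wt s) (component (del_verts (hE s) {z}) v)"
  shows "L \<le> rem s v"
proof -
  let ?N = "nbrs (hE s) v"
  let ?g = "\<lambda>u. Wt (wt s) (Tcomp (hE s) u v)"
  have finN: "finite ?N" using fin by (rule finite_nbrs)
  show ?thesis
  proof (cases "?N = {}")
    case True
    then show ?thesis
      using K component_no_nbrs[OF True] by (simp add: rem_def Wt_def)
  next
    case False
    have "Max (?g ` ?N) \<in> ?g ` ?N" using finN False by (intro Max_in) auto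
    then obtain u0 where u0: "u0 \<in> ?N" "?g u0 = Max (?g ` ?N)" by auto
    have "Max (insert 0 (?g ` ?N)) = ?g u0"
      using finN False u0 Wt_nonneg[of "wt s" "Tcomp (hE s) u0 v"] by (simp add: Max_insert)
    then have "rem s v = (\<Sum>u\<in>?N - {u0}. ?g u) + real (wt s v)"
      unfolding rem_def using u0 finN by (simp add: sum.remove)
    then show ?thesis
      using T[OF u0(1)] Wt_component_del_nbr_le[OF fin u0(1), of "wt s"] by simp
  qed
qed

definition tree_prefix :: "'a list \<Rightarrow> nat \<Rightarrow> 'a set set" where
  "tree_prefix xs m = {{xs ! i, xs ! ((i - 1) div 2)} | i. 0 < i \<and> i < m}"

lemma tree_edges_prefix: "tree_edges xs = tree_prefix xs (length xs)"
  unfolding tree_edges_def tree_prefix_def by simp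

lemma tree_prefix_mono: "m \<le> m' \<Longrightarrow> tree_prefix xs m \<subseteq> tree_prefix xs m'"
  unfolding tree_prefix_def by auto

lemma tree_prefix_Suc:
  "tree_prefix xs (Suc m) =
     tree_prefix xs m \<union> (if 0 < m then {{xs ! m, xs ! ((m - 1) div 2)}} else {})"
  unfolding tree_prefix_def by (auto simp: less_Suc_eq)

lemma tree_prefix_edge: "0 < k \<Longrightarrow> k < m \<Longrightarrow> {xs ! k, xs ! ((k - 1) div 2)} \<in> tree_prefix xs m"
  unfolding tree_prefix_def by auto

lemma tree_prefix_nodes: "e \<in> tree_prefix xs m \<Longrightarrow> \<exists>i j. e = {xs ! i, xs ! j} \<and> i < m \<and> j < i"
  unfolding tree_prefix_def by force

lemma tree_prefix_connected: "k < m \<Longrightarrow> xs ! k \<in> component (tree_prefix xs m) (xs ! 0)"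
proof (induction k rule: less_induct)
  case (less k)
  show ?case
  proof (cases "k = 0")
    case False
    let ?p = "(k - 1) div 2"
    have "xs ! ?p \<in> component (tree_prefix xs m) (xs ! 0)" using less False by auto
    moreover have "{xs ! ?p, xs ! k} \<in> tree_prefix xs m"
      using tree_prefix_edge[of k m xs] False less.prems by (simp add: insert_commute)
    ultimately show ?thesis using component_edge component_trans by metis
  qed simp
qed

lemma tree_edges_connected: "a \<in> set xs \<Longrightarrow> b \<in> set xs \<Longrightarrow> b \<in> component (tree_edges xs) a"
  unfolding tree_edges_prefix
  by (metis in_set_conv_nth tree_prefix_connected component_same)

lemma tree_edges_nbrs:
  assumes d: "distinct xs" and i: "i < length xs" and y: "y \<in> nbrs (tree_edges xs) (xs ! i)"
  shows "(0 < i \<and> y = xs ! ((i - 1) div 2)) \<or> (2*i+1 < length xs \<and> y = xs ! (2*i+1))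
       \<or> (2*i+2 < length xs \<and> y = xs ! (2*i+2))"
proof -
  from y obtain k where k: "{xs ! i, y} = {xs ! k, xs ! ((k - 1) div 2)}" "0 < k" "k < length xs"
    unfolding nbrs_def tree_edges_def by auto
  have pk: "(k - 1) div 2 < length xs" using k by auto
  show ?thesis
  proof (cases "xs ! i = xs ! k")
    case True
    then have "i = k" using d i k(3) nth_eq_iff_index_eq by blast
    moreover have "y = xs ! ((k - 1) div 2)" using k True by (metis doubleton_eq_iff)
    ultimately show ?thesis using k by auto
  next
    case False
    then have "xs ! i = xs ! ((k - 1) div 2)" "y = xs ! k" using k by (metis doubleton_eq_iff)+
    then have "i = (k - 1) div 2" using d i pk nth_eq_iff_index_eq by blast
    then have "k = 2*i+1 \<or> k = 2*i+2" using k(2) by auto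
    then show ?thesis using \<open>y = xs ! k\<close> k(3) by auto
  qed
qed

lemma tree_edges_mem:
  assumes "distinct xs" "{p,q} \<in> tree_edges xs"
  shows "p \<in> set xs \<and> q \<in> set xs \<and> p \<noteq> q"
proof -
  obtain k where k: "{p,q} = {xs ! k, xs ! ((k - 1) div 2)}" "0 < k" "k < length xs"
    using assms(2) unfolding tree_edges_def by auto
  have "(k - 1) div 2 < k" using k by auto
  then have "xs ! k \<noteq> xs ! ((k - 1) div 2)" "xs ! ((k - 1) div 2) \<in> set xs"
    using assms(1) k nth_eq_iff_index_eq by fastforce+
  then show ?thesis using k by (auto simp: doubleton_eq_iff)
qed

lemma simple_graph_finite: "finite V \<Longrightarrow> simple_graph V E \<Longrightarrow> finite E"
  unfolding simple_graph_def by (rule finite_subset[of _ "Pow V"]) auto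

lemma simple_graph_finite_edges: "simple_graph V E \<Longrightarrow> \<forall>e\<in>E. finite e"
  unfolding simple_graph_def by auto

definition target :: "'a set set \<Rightarrow> 'a dash_state \<Rightarrow> 'a \<Rightarrow> real" where
  "target E0 s x = 2 powr (real_of_int (delta E0 (gE s) x) / 2)"

definition ids_are_components :: "'a dash_state \<Rightarrow> bool" where
  "ids_are_components s \<longleftrightarrow>
     (\<forall>a\<in>alive s. \<forall>b\<in>alive s. cid s a = cid s b \<longleftrightarrow> b \<in> component (hE s) a)"

definition weights_cover :: "'a set set \<Rightarrow> 'a dash_state \<Rightarrow> bool" where
  "weights_cover E0 s \<longleftrightarrow> (\<forall>x\<in>alive s. target E0 s x \<le> Wt (wt s) (component (hE s) x) \<and>
      (\<forall>z\<in>nbrs (hE s) x. target E0 s x \<le> Wt (wt s) (component (del_verts (hE s) {z}) x)))"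

definition dash_inv :: "'a set \<Rightarrow> 'a set set \<Rightarrow> 'a dash_state \<Rightarrow> bool" where
  "dash_inv V0 E0 s \<longleftrightarrow> finite (alive s) \<and> alive s \<subseteq> V0 \<and> simple_graph (alive s) (gE s) \<and>
     hE s \<subseteq> gE s \<and> forest (hE s) \<and> ids_are_components s \<and> weights_cover E0 s"

lemma dash_inv_init:
  assumes "finite V0" "simple_graph V0 E0" "inj_on iid V0"
  shows "dash_inv V0 E0 \<lparr>alive = V0, gE = E0, hE = {}, cid = iid, wt = (\<lambda>_. 1)\<rparr>"
proof -
  have c1: "component {} a = {a}" for a :: 'a by (rule component_no_nbrs) (simp add: nbrs_def)
  have "target E0 \<lparr>alive = V0, gE = E0, hE = {}, cid = iid, wt = (\<lambda>_. 1)\<rparr> x = 1" for x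
    unfolding target_def delta_def by simp
  then show ?thesis
    using assms c1 forest_empty
    by (auto simp: dash_inv_def ids_are_components_def weights_cover_def inj_on_def Wt_def nbrs_def)
qed

locale dash_step =
  fixes V0 :: "'a set" and E0 :: "'a set set" and iid :: "'a \<Rightarrow> real" and s :: "'a dash_state"
    and v :: 'a and S :: "'a set" and xs :: "'a list" and c :: 'a and H :: "'a set set"
    and Eh' :: "'a set set"
  assumes inv: "dash_inv V0 E0 s"
    and inj: "inj_on iid V0"
    and S_def: "S = UNset iid (cid s) (gE s) v \<union> nbrs (hE s) v"
    and set_xs: "set xs = S" and distinct_xs: "distinct xs"
    and sorted_xs: "sorted (map (delta E0 (gE s)) xs)"
    and c_nbr: "nbrs (hE s) v \<noteq> {} \<longrightarrow> c \<in> nbrs (hE s) v"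
    and H_def: "H = tree_edges xs"
    and Eh'_def: "Eh' = {e \<in> hE s. v \<notin> e} \<union> H"
begin

abbreviation "Eh \<equiv> hE s"
abbreviation "Eg \<equiv> gE s"
abbreviation "V \<equiv> alive s"
abbreviation "w \<equiv> wt s"
abbreviation "Eh_v \<equiv> del_verts (hE s) {v}"
abbreviation "piece x \<equiv> component (del_verts (hE s) {v}) x"
abbreviation "UNv \<equiv> UNset iid (cid s) (gE s) v"
abbreviation "n \<equiv> length xs"
abbreviation "merged \<equiv> \<Union>y\<in>S. piece y"
abbreviation "Eg' \<equiv> {e \<in> gE s. v \<notin> e} \<union> H"
abbreviation "w' \<equiv> (if nbrs (hE s) v = {} then wt s else (wt s)(c := wt s c + wt s v))"
abbreviation "tgt x \<equiv> target E0 s x"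
abbreviation "tgt' x \<equiv> 2 powr (real_of_int (delta E0 Eg' x) / 2)"
abbreviation "tree_deg i \<equiv>
  (if 0 < i then 1 else 0) + (if 2*i+1 < n then 1 else 0) + (if 2*i+2 < n then 1 else (0::nat))"

lemma finite_V: "finite V" and V_subset: "V \<subseteq> V0" and simple_Eg: "simple_graph V Eg"
  and Eh_subset_Eg: "Eh \<subseteq> Eg" and forest_Eh: "forest Eh" and ids: "ids_are_components s"
  and weights: "weights_cover E0 s"
  using inv unfolding dash_inv_def by auto

lemma finite_Eh: "finite Eh"
  using simple_graph_finite[OF finite_V simple_Eg] Eh_subset_Eg by (rule finite_subset[rotated])

lemma Eh_edges_finite: "\<forall>e\<in>Eh. finite e"
  using simple_graph_finite_edges[OF simple_Eg] Eh_subset_Eg by blast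

lemma finite_component_Eh: "finite (component (del_verts Eh Z) x)"
  using finite_Eh Eh_edges_finite by (rule finite_del_verts_component)

lemma Eg_edge_V: "{a,b} \<in> Eg \<Longrightarrow> a \<in> V \<and> b \<in> V"
  using simple_Eg unfolding simple_graph_def by (metis doubleton_eq_iff)

lemma nbrs_Eg: "y \<in> nbrs Eg x \<Longrightarrow> y \<in> V \<and> x \<in> V \<and> y \<noteq> x"
  unfolding nbrs_def using Eg_edge_V by blast

lemma nbrs_Eh_Eg: "nbrs Eh x \<subseteq> nbrs Eg x"
  using Eh_subset_Eg unfolding nbrs_def by blast

lemma finite_nbrs_Eg: "finite (nbrs Eg x)"
  using finite_V nbrs_Eg by (meson finite_subset subsetI)

lemma component_Eh_V: "x \<in> V \<Longrightarrow> component Eh x \<subseteq> V"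
proof (rule component_closed)
  fix p q assume "{p,q} \<in> Eh" then show "q \<in> V" using Eh_subset_Eg Eg_edge_V by blast
qed

lemma cid_component: "a \<in> V \<Longrightarrow> b \<in> component Eh a \<Longrightarrow> cid s b = cid s a"
proof -
  assume a: "a \<in> V" and b: "b \<in> component Eh a"
  then have "b \<in> V" using component_Eh_V by blast
  then have "(cid s a = cid s b) = (b \<in> component Eh a)" using ids a unfolding ids_are_components_def by blast
  then show ?thesis using b by simp
qed

lemma UNv_nbrs_Eg: "UNv \<subseteq> nbrs Eg v" unfolding UNset_def by auto
lemma UNv_cid: "x \<in> UNv \<Longrightarrow> cid s x \<noteq> cid s v" unfolding UNset_def by auto

lemma S_nbrs_Eg: "S \<subseteq> nbrs Eg v" using UNv_nbrs_Eg nbrs_Eh_Eg S_def by blast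
lemma S_V: "S \<subseteq> V - {v}" using S_nbrs_Eg nbrs_Eg by blast
lemma nbrs_Eh_S: "nbrs Eh v \<subseteq> S" using S_def by blast
lemma finite_S: "finite S" using set_xs by auto

lemma nbrs_Eh_component: "x \<in> nbrs Eh v \<Longrightarrow> x \<in> component Eh v"
  unfolding nbrs_def by (auto intro: component_edge)

lemma v_notin_component_UN: "x \<in> UNv \<Longrightarrow> v \<notin> component Eh x"
proof
  assume x: "x \<in> UNv" and v: "v \<in> component Eh x"
  have "x \<in> V" using x UNv_nbrs_Eg nbrs_Eg by blast
  then have "cid s v = cid s x" using cid_component v by blast
  then show False using UNv_cid[OF x] by simp
qed

lemma piece_UN: "x \<in> UNv \<Longrightarrow> piece x = component Eh x"
  using v_notin_component_UN by (intro component_del_verts_disjoint) auto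

lemma piece_subset: "piece x \<subseteq> component Eh x" by (rule component_mono) (auto simp: del_verts_def)

lemma target_le_piece: "x \<in> S \<Longrightarrow> tgt x \<le> Wt w (piece x)"
proof -
  assume xS: "x \<in> S"
  have xA: "x \<in> V" using xS S_V by blast
  show ?thesis
  proof (cases "x \<in> nbrs Eh v")
    case True
    then have "v \<in> nbrs Eh x" using nbrs_sym[of x Eh v] by simp
    then show ?thesis using weights xA unfolding weights_cover_def by blast
  next
    case False
    then have "x \<in> UNv" using xS S_def by blast
    then show ?thesis using weights xA piece_UN unfolding weights_cover_def by simp
  qed
qed

lemma nbr_UNv_separated: "x \<in> nbrs Eh v \<Longrightarrow> y \<in> UNv \<Longrightarrow> y \<notin> component Eh x"
proof
  assume x: "x \<in> nbrs Eh v" and y: "y \<in> UNv" and "y \<in> component Eh x"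
  then have "y \<in> component Eh v" using component_trans[OF nbrs_Eh_component[OF x]] by blast
  then show False using v_notin_component_UN[OF y] component_sym by metis
qed

text \<open>Two members of UN(v,G) in one component of G' would have the same current ID, and each
would have the lower initial ID.\<close>

lemma UNv_separated:
  assumes x: "x \<in> UNv" and y: "y \<in> UNv" and ne: "x \<noteq> y"
  shows "y \<notin> component Eh x"
proof
  assume yx: "y \<in> component Eh x"
  have xV: "x \<in> V" and yV: "y \<in> V" using x y UNv_nbrs_Eg nbrs_Eg by blast+
  have cideq: "cid s y = cid s x" using cid_component xV yx by blast
  have "iid x \<le> iid y" "iid y \<le> iid x"
    using x y UNv_nbrs_Eg cideq unfolding UNset_def by auto
  then show False using inj xV yV V_subset ne unfolding inj_on_def by (meson antisym subsetD)
qed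

lemma S_notin_piece:
  assumes s1: "s1 \<in> S" and s2: "s2 \<in> S" and ne: "s1 \<noteq> s2"
  shows "s2 \<notin> piece s1"
proof
  assume h: "s2 \<in> piece s1"
  then have hE: "s2 \<in> component Eh s1" using piece_subset by blast
  consider "s1 \<in> nbrs Eh v" "s2 \<in> nbrs Eh v" | "s1 \<in> nbrs Eh v" "s2 \<in> UNv"
    | "s1 \<in> UNv" "s2 \<in> nbrs Eh v" | "s1 \<in> UNv" "s2 \<in> UNv"
    using s1 s2 S_def by blast
  then show False
  proof cases
    case 1
    then show False
      using h forest_nbrs_separated[OF forest_Eh, of v s1 s2] ne unfolding nbrs_def by auto
  next
    case 2
    then show False using nbr_UNv_separated hE by blast
  next
    case 3
    then show False using nbr_UNv_separated component_sym[OF hE] by blast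
  next
    case 4
    then show False using UNv_separated ne hE by blast
  qed
qed

lemma pieces_disjoint: "s1 \<in> S \<Longrightarrow> s2 \<in> S \<Longrightarrow> s1 \<noteq> s2 \<Longrightarrow> piece s1 \<inter> piece s2 = {}"
proof (rule ccontr)
  assume s: "s1 \<in> S" "s2 \<in> S" "s1 \<noteq> s2" and "piece s1 \<inter> piece s2 \<noteq> {}"
  then obtain y where y: "y \<in> piece s1" "y \<in> piece s2" by blast
  have "s2 \<in> piece y" using component_sym[OF y(2)] .
  then have "s2 \<in> piece s1" using component_trans[OF y(1)] by blast
  then show False using S_notin_piece s by blast
qed

lemma H_edge: "{p,q} \<in> H \<Longrightarrow> p \<in> S \<and> q \<in> S \<and> p \<noteq> q"
  using tree_edges_mem[OF distinct_xs] H_def set_xs by blast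

lemma H_nodes: "e \<in> H \<Longrightarrow> \<exists>a b. e = {a,b} \<and> a \<in> S \<and> b \<in> S \<and> a \<noteq> b"
  using H_edge unfolding H_def tree_edges_def by blast

lemma H_connected: "a \<in> S \<Longrightarrow> b \<in> S \<Longrightarrow> b \<in> component H a"
  using tree_edges_connected[of a xs b] H_def set_xs by simp

lemma Eh'_eq: "Eh' = Eh_v \<union> H"
  using Eh'_def by (auto simp: del_verts_def)

lemma H_del_verts: "Z \<inter> S = {} \<Longrightarrow> H \<subseteq> del_verts Eh' Z"
proof
  fix e assume Z: "Z \<inter> S = {}" and e: "e \<in> H"
  obtain a b where "e = {a,b}" "a \<in> S" "b \<in> S" using H_nodes[OF e] by blast
  then have "e \<inter> Z = {}" using Z by blast
  then show "e \<in> del_verts Eh' Z" using e Eh'_eq by (simp add: del_verts_def)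
qed

lemma piece_subset_Eh': "piece x \<subseteq> component Eh' x" using Eh'_eq by (intro component_mono) auto

lemma in_merged: "t \<in> S \<Longrightarrow> y \<in> piece t \<Longrightarrow> y \<in> merged" by (rule UN_I)
lemma S_in_merged: "t \<in> S \<Longrightarrow> t \<in> merged" using in_merged[of t t] by simp

lemma component_Eh'_S: "x \<in> S \<Longrightarrow> component Eh' x = merged"
proof
  assume xS: "x \<in> S"
  show "merged \<subseteq> component Eh' x"
  proof
    fix y assume "y \<in> merged"
    then obtain t where t: "t \<in> S" "y \<in> piece t" by blast
    have "t \<in> component H x" using H_connected xS t(1) by blast
    moreover have "component H x \<subseteq> component Eh' x" using Eh'_eq by (intro component_mono) auto
    ultimately have tx: "t \<in> component Eh' x" by blast
    have yt: "y \<in> component Eh' t" using subsetD[OF piece_subset_Eh' t(2)] .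
    show "y \<in> component Eh' x" using component_trans[OF tx yt] .
  qed
  show "component Eh' x \<subseteq> merged"
  proof (rule component_closed)
    show "x \<in> merged" using S_in_merged[OF xS] .
  next
    fix p q assume e: "{p,q} \<in> Eh'" and p: "p \<in> merged"
    show "q \<in> merged"
    proof (cases "{p,q} \<in> H")
      case True
      then have "q \<in> S" using H_edge by blast
      then show ?thesis by (rule S_in_merged)
    next
      case False
      then have "{p,q} \<in> Eh_v" using e Eh'_eq by blast
      then have qp: "q \<in> piece p" by (rule component_edge)
      obtain t where t: "t \<in> S" "p \<in> piece t" using p by blast
      show ?thesis using in_merged[OF t(1) component_trans[OF t(2) qp]] .
    qed
  qed
qed

lemma outside_merged:
  assumes a: "a \<in> V - {v}" "a \<notin> merged"
  shows "v \<notin> component Eh a" and "component Eh' a = component Eh a"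
proof -
  show nv: "v \<notin> component Eh a"
  proof
    assume "v \<in> component Eh a"
    then have "a \<in> component Eh v" by (rule component_sym)
    then have "a \<in> component (del_verts Eh {}) v" by simp
    then have "a \<in> insert v (\<Union>u\<in>nbrs Eh v - {}. piece u)" using component_del_verts_split[of v "{}" Eh] by blast
    then obtain u where u: "u \<in> nbrs Eh v" "a \<in> piece u" using a by auto
    have "u \<in> S" using u(1) nbrs_Eh_S by blast
    then show False using in_merged[OF _ u(2)] a by blast
  qed
  have e1: "piece a = component Eh a" using nv by (intro component_del_verts_disjoint) auto
  have S_out: "t \<notin> piece a" if t: "t \<in> S" for t
  proof
    assume "t \<in> piece a"
    then have "a \<in> piece t" by (rule component_sym)
    then show False using in_merged[OF t] a by blast
  qed
  have "component (Eh_v \<union> H) a = piece a"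
  proof (rule component_Un_disjoint)
    fix e assume "e \<in> H"
    then obtain p q where "e = {p,q}" "p \<in> S" "q \<in> S" using H_nodes by blast
    then show "e \<inter> piece a = {}" using S_out by blast
  qed
  then show "component Eh' a = component Eh a" using e1 Eh'_eq by simp
qed

lemma Wt_w_le_w': "Wt w X \<le> Wt w' X"
  by (rule Wt_le_fun) auto

lemma finite_component_Eh': "finite (component (del_verts Eh' Z) x)"
proof (rule finite_del_verts_component)
  have "finite H" using H_def unfolding tree_edges_def by simp
  then show "finite Eh'" using Eh'_def finite_Eh by simp
  show "\<forall>e\<in>Eh'. finite e" using Eh'_def Eh_edges_finite H_nodes by auto
qed

lemma Eh_v_subset_Eh': "Eh_v \<subseteq> Eh'" using Eh'_eq by blast

lemma S_subset_component_del_verts: "p \<in> S \<Longrightarrow> Z \<inter> S = {} \<Longrightarrow> S \<subseteq> component (del_verts Eh' Z) p"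
  using H_connected component_mono[OF H_del_verts] by blast

text \<open>Reachability in G' - Z survives the step, where reaching v is replaced by reaching all of S.\<close>

lemma component_step_reach:
  assumes x: "x \<in> V - {v}"
    and cond: "v \<in> component (del_verts Eh Z) x \<Longrightarrow> Z \<inter> S = {}"
  defines "T' \<equiv> component (del_verts Eh' Z) x"
  shows "component (del_verts Eh Z) x \<subseteq> {y. (y \<noteq> v \<longrightarrow> y \<in> T') \<and> (y = v \<longrightarrow> S \<subseteq> T')}"
    (is "_ \<subseteq> ?Q")
proof -
  have "component (del_verts Eh Z) x \<subseteq> component (del_verts Eh Z) x \<inter> ?Q"
  proof (rule component_closed)
    show "x \<in> component (del_verts Eh Z) x \<inter> ?Q" using x unfolding T'_def by simp
  next
    fix p q assume e: "{p,q} \<in> del_verts Eh Z" and p: "p \<in> component (del_verts Eh Z) x \<inter> ?Q"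
    have pT: "p \<in> component (del_verts Eh Z) x" using p by blast
    have qT: "q \<in> component (del_verts Eh Z) x" using component_trans[OF pT component_edge[OF e]] .
    have eE: "{p,q} \<in> Eh" and eZ: "{p,q} \<inter> Z = {}" using e by (auto simp: del_verts_def)
    have pQ: "p \<in> ?Q" using p by blast
    have T'cl: "y \<in> T' \<Longrightarrow> component (del_verts Eh' Z) y \<subseteq> T'" for y unfolding T'_def by (rule component_subset)
    have "q \<in> ?Q"
    proof (cases "q = v")
      case qv: True
      show ?thesis
      proof (cases "p = v")
        case True then show ?thesis using pQ qv by simp
      next
        case pv: False
        have "v \<in> component (del_verts Eh Z) x" using qT qv by simp
        then have ZS: "Z \<inter> S = {}" by (rule cond)
        have "{v,p} \<in> Eh" using eE qv by (simp add: insert_commute)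
        then have "p \<in> nbrs Eh v" using pv by (simp add: nbrs_def)
        then have pS: "p \<in> S" using nbrs_Eh_S by blast
        have "p \<in> T'" using pQ pv by simp
        then have "S \<subseteq> T'" using S_subset_component_del_verts[OF pS ZS] T'cl by blast
        then show ?thesis using qv by simp
      qed
    next
      case qv: False
      show ?thesis
      proof (cases "p = v")
        case True
        have "{v,q} \<in> Eh" using eE True by simp
        then have "q \<in> nbrs Eh v" using qv by (simp add: nbrs_def)
        then have "q \<in> S" using nbrs_Eh_S by blast
        moreover have "S \<subseteq> T'" using pQ True by simp
        ultimately show ?thesis using qv by auto
      next
        case pv: False
        have pT': "p \<in> T'" using pQ pv by simp
        have "{p,q} \<in> Eh_v" using eE pv qv by (simp add: del_verts_def)
        then have "{p,q} \<in> del_verts Eh' Z" using Eh_v_subset_Eh' eZ by (auto simp: del_verts_def)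
        then have "q \<in> component (del_verts Eh' Z) p" by (rule component_edge)
        then have "q \<in> T'" using T'cl[OF pT'] by blast
        then show ?thesis using qv by simp
      qed
    qed
    then show "q \<in> component (del_verts Eh Z) x \<inter> ?Q" using qT by blast
  qed
  then show ?thesis by blast
qed

lemma weight_monotone:
  assumes x: "x \<in> V - {v}"
    and cond: "v \<in> component (del_verts Eh Z) x \<Longrightarrow> Z \<inter> S = {}"
  shows "Wt w (component (del_verts Eh Z) x) \<le> Wt w' (component (del_verts Eh' Z) x)"
proof -
  define T where "T = component (del_verts Eh Z) x"
  define T' where "T' = component (del_verts Eh' Z) x"
  have reach: "T \<subseteq> {y. (y \<noteq> v \<longrightarrow> y \<in> T') \<and> (y = v \<longrightarrow> S \<subseteq> T')}"
    unfolding T_def T'_def using component_step_reach[OF x cond] .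
  have finT: "finite T" unfolding T_def by (rule finite_component_Eh)
  have finT': "finite T'" unfolding T'_def by (rule finite_component_Eh')
  have TT': "T - {v} \<subseteq> T'" using reach by blast
  show ?thesis
  proof (cases "v \<in> T")
    case False
    then have "Wt w T \<le> Wt w T'" using finT' TT' by (intro Wt_mono) auto
    also have "\<dots> \<le> Wt w' T'" by (rule Wt_w_le_w')
    finally show ?thesis unfolding T_def T'_def .
  next
    case True
    have "nbrs Eh v \<noteq> {}"
    proof
      assume N: "nbrs Eh v = {}"
      have "T \<subseteq> component Eh x" unfolding T_def by (rule component_mono) (auto simp: del_verts_def)
      then have "v \<in> component Eh x" using True by blast
      then have "x \<in> component Eh v" by (rule component_sym)
      then show False using component_no_nbrs[OF N] x by simp
    qed
    then have "c \<in> S" and w': "w' = w(c := w c + w v)" using c_nbr nbrs_Eh_S by auto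
    moreover have "S \<subseteq> T'" using True reach by blast
    ultimately have "c \<in> T'" by blast
    then show ?thesis using Wt_transfer[OF finT finT' TT'] w' unfolding T_def T'_def by simp
  qed
qed

text \<open>A G'-neighbour z of v would close a cycle with x, and a member of UN(v,G) is not connected
to v in G'.\<close>

lemma cut_vertex_notin_S:
  assumes x: "x \<in> V - {v}" and z: "z \<in> nbrs Eh x" and zv: "z \<noteq> v"
    and vin: "v \<in> component (del_verts Eh {z}) x"
  shows "z \<notin> S"
proof
  assume zS: "z \<in> S"
  have xz: "{x,z} \<in> Eh" "z \<noteq> x" using z by (auto simp: nbrs_def)
  have zx: "z \<in> component Eh x" using component_edge[OF xz(1)] .
  have "component (del_verts Eh {z}) x \<subseteq> component Eh x" by (rule component_mono) (auto simp: del_verts_def)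
  then have vx: "v \<in> component Eh x" using vin by blast
  show False
  proof (cases "z \<in> nbrs Eh v")
    case True
    have zvE: "{z,v} \<in> Eh" using True by (simp add: nbrs_def insert_commute)
    have nv: "v \<notin> component (Eh - {{z,v}}) z" using forest_Eh zvE zv unfolding forest_def by blast
    have ne: "{z,x} \<noteq> {z,v}"
    proof
      assume "{z,x} = {z,v}"
      then have "x \<in> {z,v}" by (metis insertI1 insert_commute)
      then show False using x xz(2) by auto
    qed
    have "{z,x} \<in> Eh - {{z,v}}" using xz(1) ne by (simp add: insert_commute)
    then have 1: "x \<in> component (Eh - {{z,v}}) z" by (rule component_edge)
    have "component (del_verts Eh {z}) x \<subseteq> component (Eh - {{z,v}}) x" by (rule component_mono) (auto simp: del_verts_def)
    then have 2: "v \<in> component (Eh - {{z,v}}) x" using vin by blast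
    show False using component_trans[OF 1 2] nv by simp
  next
    case False
    then have "z \<in> UNv" using zS S_def by blast
    moreover have "v \<in> component Eh z" using component_same[OF zx vx] .
    ultimately show False using v_notin_component_UN by blast
  qed
qed

lemma nbrs_Eg': "nbrs Eg' x \<subseteq> (nbrs Eg x - {v}) \<union> nbrs H x"
  unfolding nbrs_def by auto

lemma nbrs_H_notin_S: "x \<notin> S \<Longrightarrow> nbrs H x = {}"
  unfolding nbrs_def using H_edge by blast

lemma finite_nbrs_H: "finite (nbrs H x)"
proof -
  have "nbrs H x \<subseteq> S" unfolding nbrs_def using H_edge by blast
  then show ?thesis using finite_S by (rule finite_subset)
qed

lemma card_nbrs_H: "i < n \<Longrightarrow> card (nbrs H (xs!i)) \<le> tree_deg i"
proof -
  assume i: "i < n"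
  define B1 where "B1 = (if 0 < i then {xs ! ((i - 1) div 2)} else {})"
  define B2 where "B2 = (if 2*i+1 < n then {xs ! (2*i+1)} else {})"
  define B3 where "B3 = (if 2*i+2 < n then {xs ! (2*i+2)} else {})"
  have "nbrs H (xs!i) \<subseteq> B1 \<union> B2 \<union> B3"
  proof
    fix y assume "y \<in> nbrs H (xs!i)"
    then have "y \<in> nbrs (tree_edges xs) (xs!i)" using H_def by simp
    from tree_edges_nbrs[OF distinct_xs i this] show "y \<in> B1 \<union> B2 \<union> B3"
    proof (elim disjE conjE)
      assume "0 < i" "y = xs ! ((i - 1) div 2)" then have "y \<in> B1" unfolding B1_def by simp
      then show ?thesis by blast
    next
      assume "2*i+1 < n" "y = xs ! (2*i+1)" then have "y \<in> B2" unfolding B2_def by simp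
      then show ?thesis by blast
    next
      assume "2*i+2 < n" "y = xs ! (2*i+2)" then have "y \<in> B3" unfolding B3_def by simp
      then show ?thesis by blast
    qed
  qed
  then have "card (nbrs H (xs!i)) \<le> card (B1 \<union> B2 \<union> B3)"
    by (rule card_mono[rotated]) (simp add: B1_def B2_def B3_def)
  also have "\<dots> \<le> card B1 + card B2 + card B3"
    by (metis (no_types, lifting) add_le_mono card_Un_le le_refl order_trans)
  also have "\<dots> = tree_deg i" unfolding B1_def B2_def B3_def by simp
  finally show ?thesis .
qed

lemma delta_notin_S: "x \<notin> S \<Longrightarrow> delta E0 Eg' x \<le> delta E0 Eg x"
proof -
  assume xS: "x \<notin> S"
  have "nbrs Eg' x \<subseteq> nbrs Eg x" using nbrs_Eg'[of x] nbrs_H_notin_S[OF xS] by blast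
  then have "card (nbrs Eg' x) \<le> card (nbrs Eg x)" using finite_nbrs_Eg by (intro card_mono)
  then show ?thesis unfolding delta_def by simp
qed

lemma delta_in_S: "i < n \<Longrightarrow> delta E0 Eg' (xs!i) \<le> delta E0 Eg (xs!i) - 1 + int (tree_deg i)"
proof -
  assume i: "i < n"
  let ?x = "xs!i"
  have xS: "?x \<in> S" using i set_xs by auto
  have "?x \<in> nbrs Eg v" using xS S_nbrs_Eg by blast
  then have vN: "v \<in> nbrs Eg ?x" using nbrs_sym[of ?x Eg v] by simp
  have "card (nbrs Eg' ?x) \<le> card ((nbrs Eg ?x - {v}) \<union> nbrs H ?x)"
    using nbrs_Eg' finite_nbrs_Eg finite_nbrs_H by (intro card_mono) auto
  also have "\<dots> \<le> card (nbrs Eg ?x - {v}) + card (nbrs H ?x)" by (rule card_Un_le)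
  also have "\<dots> \<le> (card (nbrs Eg ?x) - 1) + tree_deg i" using card_nbrs_H[OF i] vN finite_nbrs_Eg by simp
  finally have "card (nbrs Eg' ?x) \<le> (card (nbrs Eg ?x) - 1) + tree_deg i" .
  moreover have "card (nbrs Eg ?x) \<ge> 1" using vN finite_nbrs_Eg
    by (metis One_nat_def Suc_leI card_gt_0_iff empty_iff)
  ultimately have "int (card (nbrs Eg' ?x)) \<le> int (card (nbrs Eg ?x)) - 1 + int (tree_deg i)" by linarith
  then show ?thesis unfolding delta_def by simp
qed

lemma target'_notin_S: "x \<notin> S \<Longrightarrow> tgt' x \<le> tgt x"
  unfolding target_def using delta_notin_S by (intro powr_mono) auto

lemma target'_in_S: "i < n \<Longrightarrow> tgt' (xs!i) \<le> (if 2 \<le> tree_deg i then 2 * tgt (xs!i) else tgt (xs!i))"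
proof -
  assume i: "i < n"
  have d: "delta E0 Eg' (xs!i) \<le> delta E0 Eg (xs!i) - 1 + int (tree_deg i)" using delta_in_S[OF i] .
  have d3: "tree_deg i \<le> 3" by simp
  show ?thesis
  proof (cases "2 \<le> tree_deg i")
    case True
    have "real_of_int (delta E0 Eg' (xs!i)) / 2 \<le> real_of_int (delta E0 Eg (xs!i)) / 2 + 1"
      using d d3 by linarith
    then have "tgt' (xs!i) \<le> 2 powr (real_of_int (delta E0 Eg (xs!i)) / 2 + 1)"
      by (intro powr_mono) auto
    also have "\<dots> = 2 * tgt (xs!i)" unfolding target_def by (simp add: powr_add)
    finally show ?thesis using True by simp
  next
    case False
    then have "real_of_int (delta E0 Eg' (xs!i)) / 2 \<le> real_of_int (delta E0 Eg (xs!i)) / 2"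
      using d by linarith
    then have "tgt' (xs!i) \<le> tgt (xs!i)" unfolding target_def by (intro powr_mono) auto
    then show ?thesis using False by simp
  qed
qed

lemma target_sorted: "i \<le> k \<Longrightarrow> k < n \<Longrightarrow> tgt (xs!i) \<le> tgt (xs!k)"
proof -
  assume ik: "i \<le> k" "k < n"
  have "map (delta E0 Eg) xs ! i \<le> map (delta E0 Eg) xs ! k"
    using sorted_nth_mono[OF sorted_xs ik(1)] ik by simp
  then have "delta E0 Eg (xs!i) \<le> delta E0 Eg (xs!k)" using ik by simp
  then show ?thesis unfolding target_def by (intro powr_mono) auto
qed

lemma one_piece: "t \<in> S \<Longrightarrow> piece t \<subseteq> T \<Longrightarrow> finite T \<Longrightarrow> tgt t \<le> Wt w' T"
proof -
  assume t: "t \<in> S" "piece t \<subseteq> T" "finite T"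
  have "tgt t \<le> Wt w (piece t)" using target_le_piece t(1) .
  also have "\<dots> \<le> Wt w T" using t(3,2) by (rule Wt_mono)
  also have "\<dots> \<le> Wt w' T" by (rule Wt_w_le_w')
  finally show ?thesis .
qed

lemma two_pieces:
  assumes "s1 \<in> S" "s2 \<in> S" "s1 \<noteq> s2" "piece s1 \<subseteq> T" "piece s2 \<subseteq> T" "finite T"
  shows "tgt s1 + tgt s2 \<le> Wt w' T"
proof -
  have "tgt s1 + tgt s2 \<le> Wt w (piece s1) + Wt w (piece s2)" using target_le_piece assms(1,2) by (simp add: add_mono)
  also have "\<dots> = Wt w (piece s1 \<union> piece s2)" using pieces_disjoint[OF assms(1-3)] finite_component_Eh
    by (simp add: Wt_union)
  also have "\<dots> \<le> Wt w T" using assms(4-6) by (intro Wt_mono) auto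
  also have "\<dots> \<le> Wt w' T" by (rule Wt_w_le_w')
  finally show ?thesis .
qed

lemma piece_in_component:
  assumes t: "t \<in> S" and tx: "t \<in> component (del_verts Eh' {z}) x" and zt: "z \<notin> piece t"
  shows "piece t \<subseteq> component (del_verts Eh' {z}) x"
proof -
  have "{z} \<inter> piece t = {}" using zt by blast
  then have "component (del_verts Eh_v {z}) t = piece t" by (rule component_del_verts_disjoint)
  moreover have "component (del_verts Eh_v {z}) t \<subseteq> component (del_verts Eh' {z}) t"
    using Eh_v_subset_Eh' by (intro component_mono) (auto simp: del_verts_def)
  moreover have "component (del_verts Eh' {z}) t \<subseteq> component (del_verts Eh' {z}) x" using tx by (rule component_subset)
  ultimately show ?thesis by blast
qed

lemma H_prefix: "H = tree_prefix xs n" using H_def tree_edges_prefix by simp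

lemma xs_nth_eq_iff: "a < n \<Longrightarrow> b < n \<Longrightarrow> xs!a = xs!b \<longleftrightarrow> a = b"
  using distinct_xs by (simp add: nth_eq_iff_index_eq)

lemma H_edge_component:
  assumes "0 < k" "k < n" "j < n" "j \<noteq> k" "j \<noteq> (k - 1) div 2"
  shows "xs ! ((k - 1) div 2) \<in> component (del_verts Eh' {xs!j}) (xs!k)"
proof -
  have pk: "(k - 1) div 2 < n" using assms by auto
  have "{xs!k, xs ! ((k - 1) div 2)} \<in> H" using H_prefix tree_prefix_edge[OF assms(1,2)] by simp
  moreover have "xs!j \<noteq> xs!k" "xs!j \<noteq> xs ! ((k - 1) div 2)" using xs_nth_eq_iff assms pk by auto
  ultimately have "{xs!k, xs ! ((k - 1) div 2)} \<in> del_verts Eh' {xs!j}" using Eh'_eq by (auto simp: del_verts_def)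
  then show ?thesis by (rule component_edge)
qed

lemma tree_prefix_del_verts: "j < n \<Longrightarrow> m \<le> j \<Longrightarrow> tree_prefix xs m \<subseteq> del_verts Eh' {xs!j}"
proof
  fix e assume j: "j < n" "m \<le> j" and e: "e \<in> tree_prefix xs m"
  obtain a b where ab: "e = {xs!a, xs!b}" "a < m" "b < a" using tree_prefix_nodes[OF e] by blast
  have "e \<in> H" using e tree_prefix_mono[of m n xs] j H_prefix by auto
  moreover have "xs!j \<noteq> xs!a" "xs!j \<noteq> xs!b" using xs_nth_eq_iff ab j by auto
  ultimately show "e \<in> del_verts Eh' {xs!j}" using ab Eh'_eq by (auto simp: del_verts_def)
qed

lemma tree_prefix_path: "i < j \<Longrightarrow> k < j \<Longrightarrow> j < n \<Longrightarrow> xs!k \<in> component (del_verts Eh' {xs!j}) (xs!i)"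
proof -
  assume h: "i < j" "k < j" "j < n"
  have "xs!k \<in> component (tree_prefix xs j) (xs!0)" "xs!i \<in> component (tree_prefix xs j) (xs!0)" using tree_prefix_connected h by auto
  then have "xs!k \<in> component (tree_prefix xs j) (xs!i)" using component_same by metis
  moreover have "component (tree_prefix xs j) (xs!i) \<subseteq> component (del_verts Eh' {xs!j}) (xs!i)"
    using tree_prefix_del_verts[OF h(3)] by (intro component_mono) auto
  ultimately show ?thesis by blast
qed

lemma two_pieces_sorted:
  assumes "i \<le> k1" "i \<le> k2" "k1 \<noteq> k2" "k1 < n" "k2 < n"
    "piece (xs!k1) \<subseteq> T" "piece (xs!k2) \<subseteq> T" "finite T"
  shows "2 * tgt (xs!i) \<le> Wt w' T"
proof -
  have S1: "xs!k1 \<in> S" and S2: "xs!k2 \<in> S" using assms(4,5) set_xs by auto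
  have ne: "xs!k1 \<noteq> xs!k2" using xs_nth_eq_iff assms(3-5) by auto
  have "tgt (xs!k1) + tgt (xs!k2) \<le> Wt w' T" using two_pieces[OF S1 S2 ne assms(6-8)] .
  moreover have "tgt (xs!i) \<le> tgt (xs!k1)" "tgt (xs!i) \<le> tgt (xs!k2)" using target_sorted assms by auto
  ultimately show ?thesis by linarith
qed

text \<open>When the bound of position i may have doubled, a second piece of a later node, whose bound
is at least as large because S is sorted by delta, makes up for it.\<close>

lemma target'_le_pieces:
  assumes i: "i < n" and fT: "finite T" and Px: "piece (xs!i) \<subseteq> T"
    and more: "2 \<le> tree_deg i \<Longrightarrow> \<exists>k. i < k \<and> k < n \<and> piece (xs!k) \<subseteq> T"
  shows "tgt' (xs!i) \<le> Wt w' T"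
proof -
  have xS: "xs!i \<in> S" using i set_xs by auto
  have "(if 2 \<le> tree_deg i then 2 * tgt (xs!i) else tgt (xs!i)) \<le> Wt w' T"
  proof (cases "2 \<le> tree_deg i")
    case True
    then obtain k where k: "i < k" "k < n" "piece (xs!k) \<subseteq> T" using more by blast
    have "2 * tgt (xs!i) \<le> Wt w' T" using two_pieces_sorted[of i i k] k i Px fT by auto
    then show ?thesis using True by simp
  next
    case False
    then show ?thesis using one_piece[OF xS Px fT] by simp
  qed
  then show ?thesis using target'_in_S[OF i] by linarith
qed

lemma tree_deg_ge_2: "2 \<le> tree_deg i \<Longrightarrow> 2*i+1 < n"
  by (cases "2*i+1 < n"; cases "2*i+2 < n"; cases "0 < i") auto

lemma weights_cover_s'_notin_S:
  assumes x: "x \<in> V - {v}" and xS: "x \<notin> S"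
  shows "tgt' x \<le> Wt w' (component Eh' x)"
    and "z \<in> nbrs Eh' x \<Longrightarrow> tgt' x \<le> Wt w' (component (del_verts Eh' {z}) x)"
proof -
  have "tgt' x \<le> tgt x" using target'_notin_S[OF xS] .
  also have "\<dots> \<le> Wt w (component Eh x)" using weights x unfolding weights_cover_def by blast
  also have "\<dots> \<le> Wt w' (component Eh' x)" using weight_monotone[OF x, of "{}"] by simp
  finally show "tgt' x \<le> Wt w' (component Eh' x)" .
next
  assume z: "z \<in> nbrs Eh' x"
  have e: "{x,z} \<in> Eh'" "z \<noteq> x" using z by (auto simp: nbrs_def)
  have "{x,z} \<notin> H" using H_edge xS by blast
  then have "{x,z} \<in> Eh_v" using e Eh'_eq by blast
  then have eE: "{x,z} \<in> Eh" and zv: "z \<noteq> v" by (auto simp: del_verts_def)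
  have zN: "z \<in> nbrs Eh x" using eE e(2) by (simp add: nbrs_def)
  have "tgt' x \<le> tgt x" using target'_notin_S[OF xS] .
  also have "\<dots> \<le> Wt w (component (del_verts Eh {z}) x)"
    using weights x zN unfolding weights_cover_def by blast
  also have "\<dots> \<le> Wt w' (component (del_verts Eh' {z}) x)"
    using weight_monotone[OF x] cut_vertex_notin_S[OF x zN zv] by blast
  finally show "tgt' x \<le> Wt w' (component (del_verts Eh' {z}) x)" .
qed

lemma component_bound_in_S:
  assumes i: "i < n"
  shows "tgt' (xs!i) \<le> Wt w' (component Eh' (xs!i))"
proof (rule target'_le_pieces[OF i])
  have merged: "component Eh' (xs!i) = merged" using component_Eh'_S i set_xs by auto
  show "finite (component Eh' (xs!i))" using finite_component_Eh'[of "{}"] by simp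
  show "piece (xs!i) \<subseteq> component Eh' (xs!i)" using piece_subset_Eh' .
  assume "2 \<le> tree_deg i"
  then have k: "2*i+1 < n" by (rule tree_deg_ge_2)
  then have "piece (xs!(2*i+1)) \<subseteq> merged" using set_xs in_merged by auto
  then show "\<exists>k. i < k \<and> k < n \<and> piece (xs!k) \<subseteq> component Eh' (xs!i)"
    using k merged by (intro exI[of _ "2*i+1"]) auto
qed

text \<open>Cutting the tree at a tree neighbour z of position i leaves a later position on the side of
i: a child of i if z is the parent, the sibling of z or position i + 1 if z is a child.\<close>

lemma later_node_across_tree_cut:
  assumes i: "i < n" and zN: "z \<in> nbrs H (xs!i)" and deg: "2 \<le> tree_deg i"
  obtains k where "i < k" "k < n" "xs!k \<noteq> z" "xs!k \<in> component (del_verts Eh' {z}) (xs!i)"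
proof -
  have c1: "2*i+1 < n" using tree_deg_ge_2[OF deg] .
  from tree_edges_nbrs[OF distinct_xs i zN[unfolded H_def]] show ?thesis
  proof (elim disjE conjE)
      assume i0: "0 < i" and zp: "z = xs ! ((i - 1) div 2)"
      let ?p = "(i - 1) div 2"
      have "xs ! ((2*i+1 - 1) div 2) \<in> component (del_verts Eh' {xs!?p}) (xs!(2*i+1))"
        using H_edge_component[of "2*i+1" ?p] c1 i0 i by auto
      then have "xs!(2*i+1) \<in> component (del_verts Eh' {z}) (xs!i)" using zp component_sym by simp
      moreover have "xs!(2*i+1) \<noteq> z" using zp xs_nth_eq_iff c1 i by auto
      ultimately show ?thesis using that[of "2*i+1"] c1 by simp
    next
      assume zc: "z = xs ! (2*i+1)"
      show ?thesis
      proof (cases "2*i+2 < n")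
        case c2: True
        have "xs ! ((2*i+2 - 1) div 2) \<in> component (del_verts Eh' {xs!(2*i+1)}) (xs!(2*i+2))"
          using H_edge_component[of "2*i+2" "2*i+1"] c2 by auto
        then have "xs!(2*i+2) \<in> component (del_verts Eh' {z}) (xs!i)" using zc component_sym by simp
        moreover have "xs!(2*i+2) \<noteq> z" using zc xs_nth_eq_iff c2 by auto
        ultimately show ?thesis using that[of "2*i+2"] c2 by simp
      next
        case c2: False
        then have i0: "0 < i" using deg by (cases "0 < i") (auto split: if_splits)
        have "xs!(i+1) \<in> component (del_verts Eh' {z}) (xs!i)"
          using tree_prefix_path[of i "2*i+1" "i+1"] zc i0 c1 by auto
        moreover have "xs!(i+1) \<noteq> z" using zc xs_nth_eq_iff c1 i0 by auto
        ultimately show ?thesis using that[of "i+1"] c1 i0 by simp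
      qed
    next
      assume c2: "2*i+2 < n" and zc: "z = xs ! (2*i+2)"
      have "xs!(i+1) \<in> component (del_verts Eh' {z}) (xs!i)"
        using tree_prefix_path[of i "2*i+2" "i+1"] zc c2 by auto
      moreover have "xs!(i+1) \<noteq> z" using zc xs_nth_eq_iff c2 by auto
      ultimately show ?thesis using that[of "i+1"] c2 by simp
    qed
  qed

lemma cut_bound_tree_edge:
  assumes i: "i < n" and e: "{xs!i, z} \<in> H"
  shows "tgt' (xs!i) \<le> Wt w' (component (del_verts Eh' {z}) (xs!i))"
proof (rule target'_le_pieces[OF i])
  have xS: "xs!i \<in> S" and zS: "z \<in> S" and zx: "z \<noteq> xs!i" using H_edge[OF e] by auto
  show "finite (component (del_verts Eh' {z}) (xs!i))" by (rule finite_component_Eh')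
  have "z \<notin> piece (xs!i)" using S_notin_piece[OF xS zS] zx by blast
  then show "piece (xs!i) \<subseteq> component (del_verts Eh' {z}) (xs!i)"
    using piece_in_component[OF xS] by simp
  assume "2 \<le> tree_deg i"
  moreover have "z \<in> nbrs H (xs!i)" using e zx by (simp add: nbrs_def)
  ultimately obtain k where k: "i < k" "k < n" "xs!k \<noteq> z"
    and kz: "xs!k \<in> component (del_verts Eh' {z}) (xs!i)"
    using later_node_across_tree_cut[OF i] by blast
  have kS: "xs!k \<in> S" using k(2) set_xs by auto
  have "z \<notin> piece (xs!k)" using S_notin_piece[OF kS zS] k(3) by blast
  then have "piece (xs!k) \<subseteq> component (del_verts Eh' {z}) (xs!i)" using piece_in_component[OF kS kz] by blast
  then show "\<exists>k. i < k \<and> k < n \<and> piece (xs!k) \<subseteq> component (del_verts Eh' {z}) (xs!i)" using k by blast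
qed

text \<open>A cut edge inside the piece of position i leaves the tree intact, so all later pieces, in
particular those of the last two positions, stay on the side of i.\<close>

lemma cut_bound_piece_edge:
  assumes i: "i < n" and e: "{xs!i, z} \<in> Eh_v" "z \<noteq> xs!i"
  shows "tgt' (xs!i) \<le> Wt w' (component (del_verts Eh' {z}) (xs!i))"
proof -
  let ?x = "xs!i" and ?C = "component (del_verts Eh' {z}) (xs!i)"
  have xS: "?x \<in> S" using i set_xs by auto
  have eE: "{?x,z} \<in> Eh" and zv: "z \<noteq> v" using e by (auto simp: del_verts_def)
  have zPx: "z \<in> piece ?x" using component_edge[OF e(1)] .
  have zS: "z \<notin> S" using S_notin_piece[OF xS _ e(2)[symmetric]] zPx by blast
  have zN: "z \<in> nbrs Eh ?x" using eE e(2) by (simp add: nbrs_def)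
  have x: "?x \<in> V - {v}" using xS S_V by blast
  have fT: "finite ?C" by (rule finite_component_Eh')
  show ?thesis
  proof (cases "2 \<le> tree_deg i")
    case False
    have "tgt' ?x \<le> tgt ?x" using target'_in_S[OF i] False by simp
    also have "\<dots> \<le> Wt w (component (del_verts Eh {z}) ?x)"
      using weights x zN unfolding weights_cover_def by blast
    also have "\<dots> \<le> Wt w' ?C" using weight_monotone[OF x] zS by simp
    finally show ?thesis .
  next
    case True
    have c1: "2*i+1 < n" using tree_deg_ge_2[OF True] .
    have in2: "i + 2 < n" using True c1 by (cases "0 < i"; cases "2*i+2 < n") auto
    have pieces: "piece (xs!k) \<subseteq> ?C" if k: "i < k" "k < n" for k
    proof -
      have kS: "xs!k \<in> S" using k(2) set_xs by auto
      have kx: "xs!k \<noteq> ?x" using xs_nth_eq_iff k i by auto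
      have "component H ?x \<subseteq> ?C" using H_del_verts zS by (intro component_mono) auto
      then have kin: "xs!k \<in> ?C" using H_connected[OF xS kS] by blast
      have "z \<notin> piece (xs!k)" using pieces_disjoint[OF xS kS kx[symmetric]] zPx by blast
      then show ?thesis using piece_in_component[OF kS kin] by blast
    qed
    have "2 * tgt ?x \<le> Wt w' ?C"
      using two_pieces_sorted[of i "n-1" "n-2"] pieces[of "n-1"] pieces[of "n-2"] in2 fT by auto
    moreover have "tgt' ?x \<le> 2 * tgt ?x" using target'_in_S[OF i] True by simp
    ultimately show ?thesis by linarith
  qed
qed

lemma weights_cover_s':
  assumes x: "x \<in> V - {v}"
  shows "tgt' x \<le> Wt w' (component Eh' x)"
    and "z \<in> nbrs Eh' x \<Longrightarrow> tgt' x \<le> Wt w' (component (del_verts Eh' {z}) x)"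
proof -
  show "tgt' x \<le> Wt w' (component Eh' x)"
  proof (cases "x \<in> S")
    case True
    then obtain i where "i < n" "x = xs!i" using set_xs by (metis in_set_conv_nth)
    then show ?thesis using component_bound_in_S by simp
  qed (rule weights_cover_s'_notin_S(1)[OF x])
next
  assume z: "z \<in> nbrs Eh' x"
  show "tgt' x \<le> Wt w' (component (del_verts Eh' {z}) x)"
  proof (cases "x \<in> S")
    case False
    then show ?thesis using weights_cover_s'_notin_S(2)[OF x _ z] by simp
  next
    case True
    then obtain i where i: "i < n" "x = xs!i" using set_xs by (metis in_set_conv_nth)
    have "{x,z} \<in> H \<or> {x,z} \<in> Eh_v" "z \<noteq> x" using z Eh'_eq by (auto simp: nbrs_def)
    then show ?thesis using cut_bound_tree_edge[OF i(1)] cut_bound_piece_edge[OF i(1)] i(2) by blast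
  qed
qed

definition s' :: "'a dash_state" where
  "s' = \<lparr>alive = alive s - {v}, gE = Eg', hE = Eh',
         cid = (\<lambda>y. if (\<exists>x\<in>S. reach Eh' x y) then Min (cid s ` S) else cid s y),
         wt = w'\<rparr>"

lemma s'_alive: "alive s' = V - {v}" and s'_gE: "gE s' = Eg'" and s'_hE: "hE s' = Eh'"
  and s'_wt: "wt s' = w'"
  and s'_cid: "cid s' = (\<lambda>y. if (\<exists>x\<in>S. reach Eh' x y) then Min (cid s ` S) else cid s y)"
  by (simp_all add: s'_def)

lemma reach_S_iff_merged: "(\<exists>x\<in>S. reach Eh' x y) \<longleftrightarrow> y \<in> merged"
proof
  assume "\<exists>x\<in>S. reach Eh' x y"
  then obtain x where x: "x \<in> S" "y \<in> component Eh' x" by (auto simp: reach_iff_component)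
  then show "y \<in> merged" using component_Eh'_S by blast
next
  assume "y \<in> merged"
  then obtain t where t: "t \<in> S" "y \<in> piece t" by blast
  then have "y \<in> component Eh' t" using piece_subset_Eh' by blast
  then show "\<exists>x\<in>S. reach Eh' x y" using t(1) by (auto simp: reach_iff_component)
qed

lemma component_Eh'_merged: "a \<in> merged \<Longrightarrow> component Eh' a = merged"
proof -
  assume "a \<in> merged"
  then obtain t where t: "t \<in> S" "a \<in> piece t" by blast
  then have "a \<in> component Eh' t" using piece_subset_Eh' by blast
  then have "component Eh' a = component Eh' t" by (rule component_eqI)
  then show ?thesis using component_Eh'_S[OF t(1)] by simp
qed

lemma cid_outside_merged:
  assumes b: "b \<in> V - {v}" "b \<notin> merged" and Sne: "S \<noteq> {}"
  shows "cid s b \<noteq> Min (cid s ` S)"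
proof
  assume h: "cid s b = Min (cid s ` S)"
  have "Min (cid s ` S) \<in> cid s ` S" using finite_S Sne by (intro Min_in) auto
  then obtain s0 where s0: "s0 \<in> S" "Min (cid s ` S) = cid s s0" by auto
  have s0A: "s0 \<in> V" using s0 S_V by blast
  have bA: "b \<in> V" using b by blast
  have "cid s s0 = cid s b" using h s0 by simp
  then have bs0: "b \<in> component Eh s0" using ids s0A bA unfolding ids_are_components_def by blast
  show False
  proof (cases "s0 \<in> nbrs Eh v")
    case True
    have "s0 \<in> component Eh v" using True nbrs_Eh_component by blast
    then have "b \<in> component Eh v" using component_trans[OF _ bs0] by blast
    then have "v \<in> component Eh b" by (rule component_sym)
    then show False using outside_merged(1)[OF b] by blast
  next
    case False
    then have "s0 \<in> UNv" using s0 S_def by blast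
    then have "b \<in> piece s0" using piece_UN bs0 by simp
    then show False using in_merged[OF s0(1)] b by blast
  qed
qed

lemma cid_s'_Min_iff:
  assumes b: "b \<in> V - {v}" and Sne: "S \<noteq> {}"
  shows "cid s' b = Min (cid s ` S) \<longleftrightarrow> b \<in> merged"
proof (cases "b \<in> merged")
  case True
  then show ?thesis unfolding s'_cid using reach_S_iff_merged by simp
next
  case False
  then show ?thesis using cid_outside_merged[OF b False Sne] reach_S_iff_merged
    unfolding s'_cid by auto
qed

lemma ids_s': "ids_are_components s'"
  unfolding ids_are_components_def s'_alive s'_hE
proof (intro ballI)
  fix a b assume a: "a \<in> V - {v}" and b: "b \<in> V - {v}"
  show "cid s' a = cid s' b \<longleftrightarrow> b \<in> component Eh' a"
  proof (cases "a \<in> merged")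
    case True
    then have Sne: "S \<noteq> {}" by blast
    then have "cid s' a = Min (cid s ` S)" using cid_s'_Min_iff[OF a] True by simp
    then show ?thesis using cid_s'_Min_iff[OF b Sne] component_Eh'_merged[OF True] by auto
  next
    case aM: False
    show ?thesis
    proof (cases "b \<in> merged")
      case True
      have "a \<notin> component Eh' b" using component_Eh'_merged[OF True] aM by simp
      then have "b \<notin> component Eh' a" using component_sym by metis
      moreover have Sne: "S \<noteq> {}" using True by blast
      moreover have "cid s' b = Min (cid s ` S)" using cid_s'_Min_iff[OF b Sne] True by simp
      ultimately show ?thesis using cid_s'_Min_iff[OF a Sne] aM by auto
    next
      case False
      have "cid s' a = cid s a" "cid s' b = cid s b"
        using aM False reach_S_iff_merged unfolding s'_cid by auto
      moreover have "cid s a = cid s b \<longleftrightarrow> b \<in> component Eh a"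
        using ids a b unfolding ids_are_components_def by blast
      ultimately show ?thesis using outside_merged(2)[OF a aM] by simp
    qed
  qed
qed

lemma forest_prefix: "m \<le> n \<Longrightarrow> forest (Eh_v \<union> tree_prefix xs m)"
proof (induction m)
  case 0
  have "tree_prefix xs 0 = {}" unfolding tree_prefix_def by simp
  then show ?case using forest_mono[OF forest_Eh] by (simp add: del_verts_def)
next
  case (Suc m)
  then have IH: "forest (Eh_v \<union> tree_prefix xs m)" and mn: "m < n" by auto
  show ?case
  proof (cases "0 < m")
    case False
    then show ?thesis using IH tree_prefix_Suc[of xs m] by simp
  next
    case True
    let ?p = "(m - 1) div 2"
    have pm: "?p < m" using True by auto
    have eq: "Eh_v \<union> tree_prefix xs (Suc m) = insert {xs!m, xs!?p} (Eh_v \<union> tree_prefix xs m)"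
      using tree_prefix_Suc[of xs m] True by auto
    have mS: "xs!m \<in> S" and pS: "xs!?p \<in> S" using mn pm set_xs by auto
    have ne: "xs!m \<noteq> xs!?p" using xs_nth_eq_iff mn pm by auto
    have cmp: "component (Eh_v \<union> tree_prefix xs m) (xs!m) = piece (xs!m)"
    proof (rule component_Un_disjoint)
      fix e assume e: "e \<in> tree_prefix xs m"
      obtain a b where ab: "e = {xs!a, xs!b}" "a < m" "b < a" using tree_prefix_nodes[OF e] by blast
      have aS: "xs!a \<in> S" and bS: "xs!b \<in> S" using ab mn set_xs by auto
      have "xs!a \<noteq> xs!m" "xs!b \<noteq> xs!m" using xs_nth_eq_iff ab mn by auto
      then have "xs!a \<notin> piece (xs!m)" "xs!b \<notin> piece (xs!m)" using S_notin_piece[OF mS aS] S_notin_piece[OF mS bS] by auto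
      then show "e \<inter> piece (xs!m) = {}" using ab by auto
    qed
    have "xs!?p \<notin> component (Eh_v \<union> tree_prefix xs m) (xs!m)" using cmp S_notin_piece[OF mS pS ne] by simp
    then show ?thesis using eq forest_insert[OF IH ne] by simp
  qed
qed

lemma forest_Eh': "forest Eh'" using forest_prefix[of n] Eh'_eq H_prefix by simp

lemma simple_Eg': "simple_graph (V - {v}) Eg'"
  unfolding simple_graph_def
proof
  fix e assume e: "e \<in> Eg'"
  show "\<exists>a b. e = {a, b} \<and> a \<noteq> b \<and> a \<in> V - {v} \<and> b \<in> V - {v}"
  proof (cases "e \<in> H")
    case True
    obtain a b where ab: "e = {a,b}" "a \<in> S" "b \<in> S" "a \<noteq> b" using H_nodes[OF True] by blast
    then show ?thesis using S_V by blast
  next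
    case False
    then have eG: "e \<in> Eg" "v \<notin> e" using e by auto
    obtain a b where ab: "e = {a,b}" "a \<noteq> b" "a \<in> V" "b \<in> V" using simple_Eg eG(1) unfolding simple_graph_def by blast
    then show ?thesis using eG(2) by auto
  qed
qed

lemma dash_inv_s': "dash_inv V0 E0 s'"
proof -
  have "hE s' \<subseteq> gE s'" unfolding s'_hE s'_gE using Eh_subset_Eg Eh'_eq by (auto simp: del_verts_def)
  moreover have "weights_cover E0 s'"
    unfolding weights_cover_def
  proof
    fix x assume "x \<in> alive s'"
    then have x: "x \<in> V - {v}" by (simp add: s'_alive)
    have F: "target E0 s' x = tgt' x" by (simp add: target_def s'_gE)
    show "target E0 s' x \<le> Wt (wt s') (component (hE s') x) \<and>
          (\<forall>z\<in>nbrs (hE s') x. target E0 s' x \<le> Wt (wt s') (component (del_verts (hE s') {z}) x))"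
      using weights_cover_s'[OF x] F unfolding s'_wt s'_hE by simp
  qed
  ultimately show ?thesis unfolding dash_inv_def s'_alive s'_gE s'_hE using finite_V V_subset simple_Eg' forest_Eh' ids_s'
    by auto
qed

end

lemma dash_inv_reachable:
  assumes "finite V0" "simple_graph V0 E0" "inj_on iid V0" "dash_reachable V0 E0 iid s"
  shows "dash_inv V0 E0 s"
  using assms(4)
proof (induction rule: dash_reachable.induct)
  case init
  then show ?case using dash_inv_init[OF assms(1-3)] .
next
  case (step s v S xs c H E'new)
  interpret d: dash_step V0 E0 iid s v S xs c H E'new
    using step assms(3) by unfold_locales auto
  show ?case using d.dash_inv_s' unfolding d.s'_def by simp
qed

lemma dash_inv_finite:
  assumes "dash_inv V0 E0 s"
  shows "finite (hE s)" and "\<forall>e\<in>hE s. finite e"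
proof -
  have fin: "finite (alive s)" and simple: "simple_graph (alive s) (gE s)" and sub: "hE s \<subseteq> gE s"
    using assms unfolding dash_inv_def by auto
  show "finite (hE s)" using finite_subset[OF sub simple_graph_finite[OF fin simple]] .
  show "\<forall>e\<in>hE s. finite e" using simple_graph_finite_edges[OF simple] sub by blast
qed

theorem lemma4:
  fixes V0 :: "'a set" and E0 :: "'a set set" and iid :: "'a \<Rightarrow> real"
    and s :: "'a dash_state" and v :: 'a
  assumes "finite V0"
    and "simple_graph V0 E0"
    and "connected_graph V0 E0"
    and "inj_on iid V0"
    and "iid ` V0 \<subseteq> {0..1}"
    and "dash_reachable V0 E0 iid s"
    and "v \<in> alive s"
  shows "rem s v \<ge> 2 powr (real_of_int (delta E0 (gE s) v) / 2)"
proof -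
  have inv: "dash_inv V0 E0 s" using dash_inv_reachable assms(1,2,4,6) by blast
  then have "weights_cover E0 s" unfolding dash_inv_def by simp
  then have "target E0 s v \<le> rem s v"
    using dash_inv_finite[OF inv] assms(7) by (intro rem_ge) (auto simp: weights_cover_def)
  then show ?thesis unfolding target_def by simp
qed

end
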